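(* For integers $0\le j\le n$, $$\sum_{i=j}^n\binom{2n}{2i}B_{2n-2i}{i\brack j}=\begin{cases}0,& j<n,\\ n,& j=n.\end{cases}$$
   Context: $B_n$ is the $n$th Bernoulli number, $\frac{t}{e^t-1}=\sum_{n\ge0}B_n\frac{t^n}{n!}$. The Euler polynomials $E_n(x)$ are defined by $\frac{2e^{xt}}{e^t+1}=\sum_{n\ge0}E_n(x)\frac{t^n}{n!}$. For integers $N\ge0$, the numbers ${N\brack j}$ are defined by $\sum_{j=1}^N{N\brack j}x^{2j-1}=x^{2N}-E_{2N}(x)$ (i.e. they are the negatives of the odd-degree coefficients of $E_{2N}$), with ${N\brack j}=0$ for $j\le0$ or $j>N$. *)

theory Defs
  imports "HOL-Computational_Algebra.Computational_Algebra"
begin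

definition bernoulli_num :: "nat \<Rightarrow> real" where
  "bernoulli_num n = fact n * fps_nth (fps_X / (fps_exp 1 - 1)) n"

definition euler_val :: "nat \<Rightarrow> real \<Rightarrow> real" where
  "euler_val n x = fact n * fps_nth (fps_const 2 * fps_exp x / (fps_exp 1 + 1)) n"

definition euler_poly :: "nat \<Rightarrow> real poly" where
  "euler_poly n = (THE p. \<forall>x. poly p x = euler_val n x)"

definition ebrack :: "nat \<Rightarrow> int \<Rightarrow> real" where
  "ebrack N j = (if 1 \<le> j \<and> j \<le> int N
                 then - coeff (euler_poly (2 * N)) (nat (2 * j - 1)) else 0)"

end

theory Submission
  imports Defs
begin

text \<open>
  Let \<open>U(t) = 2 / (e^t + 1)\<close>, the generating function of the values \<open>E_k(0)\<close>, and let
  \<open>B(t) = t / (e^t - 1)\<close>. Since \<open>E_m(x) = \<Sum>_d binom(m, d) E_(m-d)(0) x^d\<close>, the number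
  \<open>[i, j]\<close> is, up to factorials, the coefficient \<open>U_(2(i-j)+1)\<close>, so the sum is a multiple
  of \<open>\<Sum>_l U_(2l+1) B_(2(n-j)-2l)\<close>. As \<open>U(t) + U(-t) = 2\<close>, the even coefficients of
  \<open>U - 1\<close> vanish, so this is the coefficient of \<open>t^(2(n-j)+1)\<close> in \<open>B (U - 1)\<close>. Finally
  \<open>t/(e^t - 1) \<cdot> (1 - e^t)/(e^t + 1) = -t/(e^t + 1)\<close>, i.e. \<open>B (U - 1) = -t U / 2\<close>, and
  \<open>U_(2(n-j))\<close> is \<open>0\<close> for \<open>j < n\<close> and \<open>1\<close> for \<open>j = n\<close>.
\<close>

lemma sum_atMost_odd_terms:
  fixes f :: "nat \<Rightarrow> 'a::comm_monoid_add"
  assumes "\<And>l. f (2 * l) = 0"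
  shows "(\<Sum>i\<le>2 * N + 1. f i) = (\<Sum>l\<le>N. f (2 * l + 1))"
proof (induction N)
  case 0
  then show ?case using assms[of 0] by simp
next
  case (Suc N)
  have "2 * Suc N + 1 = Suc (Suc (2 * N + 1))" by simp
  then show ?case using Suc assms[of "Suc N"] by simp
qed

definition bernoulli_fps :: "'a::field_char_0 fps" where
  "bernoulli_fps = fps_X / (fps_exp 1 - 1)"

text \<open>The coefficients of this series are the values \<open>E\<^sub>n(0) / n!\<close>.\<close>

definition euler_zero_fps :: "'a::field_char_0 fps" where
  "euler_zero_fps = fps_const 2 / (fps_exp 1 + 1)"

lemma fps_exp_1_minus_1_neq_0: "fps_exp (1::'a::field_char_0) - 1 \<noteq> 0"
proof
  assume "fps_exp (1::'a) - 1 = 0"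
  hence "(fps_exp (1::'a) - 1) $ 1 = 0" by simp
  thus False by simp
qed

lemma fps_exp_1_plus_1_neq_0: "fps_exp (1::'a::field_char_0) + 1 \<noteq> 0"
proof
  assume "fps_exp (1::'a) + 1 = 0"
  hence "(fps_exp (1::'a) + 1) $ 0 = 0" by simp
  thus False by simp
qed

lemma bernoulli_fps_times: "bernoulli_fps * (fps_exp 1 - 1) = (fps_X :: 'a::field_char_0 fps)"
proof -
  have "subdegree (fps_exp (1::'a) - 1) = 1"
    by (rule subdegreeI) auto
  thus ?thesis unfolding bernoulli_fps_def
    by (intro fps_times_divide_eq fps_exp_1_minus_1_neq_0) simp
qed

lemma euler_zero_fps_times: "euler_zero_fps * (fps_exp 1 + 1) = (2 :: 'a::field_char_0 fps)"
  unfolding euler_zero_fps_def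
  by (simp add: fps_divide_unit mult.assoc inverse_mult_eq_1 numeral_fps_const)

lemma euler_zero_fps_reflect:
  "euler_zero_fps + (euler_zero_fps oo - fps_X) = (2 :: 'a::field_char_0 fps)"
proof -
  let ?E = "fps_exp (1::'a)" and ?U = "euler_zero_fps :: 'a fps"
  have "(?U * (?E + 1)) oo - fps_X = 2"
    by (simp add: euler_zero_fps_times)
  hence "(?U oo - fps_X) * (fps_exp (-1) + 1) = 2"
    by (simp add: fps_compose_mult_distrib fps_compose_add_distrib)
  moreover have "(fps_exp (-1) + 1) * ?E = ?E + 1"
    by (simp add: distrib_right fps_exp_add_mult[symmetric])
  ultimately have "(?U oo - fps_X) * (?E + 1) = 2 * ?E"
    by (metis mult.assoc)
  hence "(?U + (?U oo - fps_X)) * (?E + 1) = 2 * (?E + 1)"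
    by (simp only: distrib_right euler_zero_fps_times) (simp add: algebra_simps)
  thus ?thesis
    by (simp only: mult_right_cancel[OF fps_exp_1_plus_1_neq_0])
qed

lemma euler_zero_fps_nth_0 [simp]: "euler_zero_fps $ 0 = (1 :: 'a::field_char_0)"
  using arg_cong[OF euler_zero_fps_times, of "\<lambda>f. f $ 0"] by (simp add: numeral_fps_const)

lemma euler_zero_fps_nth_even:
  assumes "even n" "n \<noteq> 0"
  shows "euler_zero_fps $ n = (0 :: 'a::field_char_0)"
proof -
  have "(euler_zero_fps + (euler_zero_fps oo - fps_X)) $ n = (2 :: 'a fps) $ n"
    by (simp only: euler_zero_fps_reflect)
  thus ?thesis
    using assms by (simp add: fps_compose_uminus' numeral_fps_const)
qed

lemma bernoulli_fps_times_euler_zero_fps_minus_1: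
  "2 * (bernoulli_fps * (euler_zero_fps - 1)) = - fps_X * (euler_zero_fps :: 'a::field_char_0 fps)"
proof -
  let ?E = "fps_exp (1::'a)" and ?B = "bernoulli_fps :: 'a fps" and ?U = "euler_zero_fps :: 'a fps"
  have "2 * (?B * (?U - 1)) * ((?E - 1) * (?E + 1))
          = 2 * (?B * (?E - 1)) * (?U * (?E + 1) - (?E + 1))"
    by (simp add: algebra_simps)
  also have "\<dots> = 2 * fps_X * (2 - (?E + 1))"
    by (simp only: bernoulli_fps_times euler_zero_fps_times)
  also have "\<dots> = - fps_X * 2 * (?E - 1)"
    by (simp add: algebra_simps)
  also have "\<dots> = - fps_X * (?U * (?E + 1)) * (?E - 1)"
    by (simp only: euler_zero_fps_times)
  also have "\<dots> = (- fps_X * ?U) * ((?E - 1) * (?E + 1))"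
    by (simp add: algebra_simps)
  finally have "2 * (?B * (?U - 1)) * ((?E - 1) * (?E + 1)) = (- fps_X * ?U) * ((?E - 1) * (?E + 1))" .
  moreover have "(?E - 1) * (?E + 1) \<noteq> 0"
    using fps_exp_1_minus_1_neq_0 fps_exp_1_plus_1_neq_0 by simp
  ultimately show ?thesis by (metis mult_right_cancel)
qed

lemma euler_zero_fps_odd_convolution:
  "(\<Sum>l\<le>N. euler_zero_fps $ (2 * l + 1) * bernoulli_fps $ (2 * N - 2 * l))
     = - euler_zero_fps $ (2 * N) / (2 :: 'a::field_char_0)"
proof -
  let ?B = "bernoulli_fps :: 'a fps" and ?U = "euler_zero_fps :: 'a fps"
  have "(?B * (?U - 1)) $ (2 * N + 1) = (\<Sum>i\<le>2 * N + 1. (?U - 1) $ i * ?B $ (2 * N + 1 - i))"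
    by (simp add: mult.commute[of ?B] fps_mult_nth atLeast0AtMost)
  also have "\<dots> = (\<Sum>l\<le>N. ?U $ (2 * l + 1) * ?B $ (2 * N - 2 * l))"
    by (subst sum_atMost_odd_terms) (auto simp: euler_zero_fps_nth_even)
  finally have "(?B * (?U - 1)) $ (2 * N + 1) = (\<Sum>l\<le>N. ?U $ (2 * l + 1) * ?B $ (2 * N - 2 * l))" .
  moreover have "2 * (?B * (?U - 1)) $ (2 * N + 1) = - ?U $ (2 * N)"
    using arg_cong[OF bernoulli_fps_times_euler_zero_fps_minus_1, of "\<lambda>f. f $ (2 * N + 1)"]
    by (simp add: numeral_fps_const)
  ultimately show ?thesis by (simp add: field_simps)
qed

lemma euler_val_conv_fps: "euler_val n x = fact n * (fps_exp x * euler_zero_fps) $ n"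
proof -
  have "fps_const 2 * fps_exp x / (fps_exp 1 + 1) = fps_exp x * euler_zero_fps"
    unfolding euler_zero_fps_def by (simp add: fps_divide_unit mult_ac)
  thus ?thesis unfolding euler_val_def by simp
qed

lemma euler_poly_eq_sum_monom:
  "euler_poly n = (\<Sum>d\<le>n. monom (real (n choose d) * fact (n - d) * euler_zero_fps $ (n - d)) d)"
    (is "_ = ?p")
proof -
  have "poly ?p x = euler_val n x" for x
  proof -
    have "poly ?p x = (\<Sum>d=0..n. fact n * (x ^ d / fact d * euler_zero_fps $ (n - d)))"
      unfolding poly_sum poly_monom atMost_atLeast0
      by (intro sum.cong) (simp_all add: binomial_fact field_simps)
    also have "\<dots> = euler_val n x"
      unfolding euler_val_conv_fps fps_mult_nth by (simp add: sum_distrib_left)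
    finally show ?thesis .
  qed
  hence "(\<forall>x. poly p x = euler_val n x) \<longleftrightarrow> p = ?p" for p
    by (simp add: poly_eq_poly_eq_iff[symmetric] fun_eq_iff)
  thus ?thesis
    unfolding euler_poly_def by simp
qed

lemma coeff_euler_poly:
  "d \<le> n \<Longrightarrow> coeff (euler_poly n) d = real (n choose d) * fact (n - d) * euler_zero_fps $ (n - d)"
  unfolding euler_poly_eq_sum_monom by (simp add: coeff_sum coeff_monom)

lemma ebrack_conv_euler_zero_fps:
  assumes "1 \<le> j" "j \<le> i"
  shows "ebrack i (int j) = - (fact (2 * i) / fact (2 * j - 1)) * euler_zero_fps $ (2 * (i - j) + 1)"
proof -
  have "nat (2 * int j - 1) = 2 * j - 1" "2 * i - (2 * j - 1) = 2 * (i - j) + 1"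
    using assms by auto
  moreover have "real ((2 * i) choose (2 * j - 1)) * fact (2 * i - (2 * j - 1)) = fact (2 * i) / fact (2 * j - 1)"
    using assms by (simp add: binomial_fact field_simps)
  ultimately show ?thesis
    using assms unfolding ebrack_def by (simp add: coeff_euler_poly)
qed

lemma bernoulli_num_conv_fps: "bernoulli_num m = fact m * bernoulli_fps $ m"
  unfolding bernoulli_num_def bernoulli_fps_def ..

lemma choose_bernoulli_num_ebrack:
  assumes "1 \<le> j" "j \<le> i" "i \<le> n"
  shows "real ((2 * n) choose (2 * i)) * bernoulli_num (2 * n - 2 * i) * ebrack i (int j)
           = - (fact (2 * n) / fact (2 * j - 1))
             * (euler_zero_fps $ (2 * (i - j) + 1) * bernoulli_fps $ (2 * (n - j) - 2 * (i - j)))"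
proof -
  have "real ((2 * n) choose (2 * i)) * bernoulli_num (2 * n - 2 * i) * ebrack i (int j)
      = - (real ((2 * n) choose (2 * i)) * fact (2 * n - 2 * i)) * (fact (2 * i) / fact (2 * j - 1))
          * (euler_zero_fps $ (2 * (i - j) + 1) * bernoulli_fps $ (2 * n - 2 * i))"
    using assms by (simp add: bernoulli_num_conv_fps ebrack_conv_euler_zero_fps mult_ac)
  also have "\<dots> = - (fact (2 * n) / fact (2 * j - 1))
             * (euler_zero_fps $ (2 * (i - j) + 1) * bernoulli_fps $ (2 * (n - j) - 2 * (i - j)))"
  proof -
    have "real ((2 * n) choose (2 * i)) * fact (2 * n - 2 * i) = fact (2 * n) / fact (2 * i)"
      using assms by (simp add: binomial_fact field_simps)
    moreover have "2 * n - 2 * i = 2 * (n - j) - 2 * (i - j)"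
      using assms by simp
    ultimately show ?thesis by simp
  qed
  finally show ?thesis .
qed

theorem lemma5p2:
  fixes n j :: nat
  assumes "j \<le> n"
  shows "(\<Sum>i = j..n. real ((2 * n) choose (2 * i)) * bernoulli_num (2 * n - 2 * i)
            * ebrack i (int j)) = (if j < n then 0 else real n)"
proof (cases "j = 0")
  case True
  thus ?thesis by (simp add: ebrack_def)
next
  case False
  define N where "N = n - j"
  define K :: real where "K = fact (2 * n) / fact (2 * j - 1)"
  have "(\<Sum>i = j..n. real ((2 * n) choose (2 * i)) * bernoulli_num (2 * n - 2 * i) * ebrack i (int j))
      = (\<Sum>i = j..n. - K * (euler_zero_fps $ (2 * (i - j) + 1) * bernoulli_fps $ (2 * N - 2 * (i - j))))"
    using False by (intro sum.cong refl) (simp add: choose_bernoulli_num_ebrack K_def N_def)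
  also have "\<dots> = (\<Sum>l = 0..N. - K * (euler_zero_fps $ (2 * l + 1) * bernoulli_fps $ (2 * N - 2 * l)))"
    using assms by (simp add: sum.atLeastAtMost_shift_0[of j n] N_def)
  also have "\<dots> = - K * (\<Sum>l\<le>N. euler_zero_fps $ (2 * l + 1) * bernoulli_fps $ (2 * N - 2 * l))"
    by (simp only: sum_distrib_left atMost_atLeast0)
  also have "\<dots> = K * euler_zero_fps $ (2 * N) / 2"
    by (simp only: euler_zero_fps_odd_convolution) simp
  also have "\<dots> = (if j < n then 0 else real n)"
  proof (cases "j < n")
    case True
    thus ?thesis by (simp add: N_def euler_zero_fps_nth_even)
  next
    case False
    hence "j = n" "N = 0" using assms by (simp_all add: N_def)
    moreover have "fact (2 * n) = 2 * real n * fact (2 * n - 1)"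
      using \<open>j = n\<close> \<open>j \<noteq> 0\<close> by (simp add: fact_reduce)
    ultimately show ?thesis
      using \<open>j \<noteq> 0\<close> by (simp add: K_def)
  qed
  finally show ?thesis .
qed

end
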